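(* Let $n \geq 8$ and $P \in \mathrm{PLS}(2,3;n)$. If $P$ is not completely reduced, then the $(1,2)$-row-permutation of $P$ has a cycle of length at least $3$ whose cycle type is equivalent to a sequence containing two adjacent zeros (i.e. the cycle contains two cyclically consecutive elements neither of which lies in $\{P(1,1),P(1,2),P(1,3)\}$).
   Context: $\mathrm{PLS}(2,3;n)$ denotes the set of $n\times n$ partial Latin squares on symbols $\{1,\dots,n\}$ (each cell empty or containing one symbol, no symbol repeated in a row or column) in which rows $1,2$ and columns $1,2,3$ are completely filled and all other cells are empty. The $(1,2)$-row-permutation of $P$ is the permutation $\sigma$ of $\{1,\dots,n\}$ with $\sigma(P(1,i))=P(2,i)$ for all $i$. For a cycle $(a_1\,\dots\,a_m)$ in the disjoint cycle representation of $\sigma$, its cycle type is the $0/1$ sequence of length $m$ whose $i$th entry is $1$ if $a_i \in \{P(1,1),P(1,2),P(1,3)\}$ and $0$ otherwise. Two sequences are equivalent if one is a cyclic permutation of the other; two entries of a sequence are adjacent if one immediately follows the other. $P$ is completely reduced if the cycle type of every cycle of $\sigma$ is equivalent to one of: $00$, $01$, $11$, $101$, $111$, $1010$, $1110$, $10101$, $101010$. *)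

theory Defs
  imports Main
begin

text \<open>A partial Latin square of order n: P i j = None means cell (i,j) is empty.
  Rows, columns and symbols are indexed by {1..n}.\<close>
type_synonym pls = "nat \<Rightarrow> nat \<Rightarrow> nat option"

definition is_PLS :: "nat \<Rightarrow> pls \<Rightarrow> bool" where
  "is_PLS n P \<longleftrightarrow>
     (\<forall>i j. P i j \<noteq> None \<longrightarrow> i \<in> {1..n} \<and> j \<in> {1..n}) \<and>
     (\<forall>i j s. P i j = Some s \<longrightarrow> s \<in> {1..n}) \<and>
     (\<forall>i j j'. j \<noteq> j' \<longrightarrow> P i j \<noteq> None \<longrightarrow> P i j \<noteq> P i j') \<and>
     (\<forall>i i' j. i \<noteq> i' \<longrightarrow> P i j \<noteq> None \<longrightarrow> P i j \<noteq> P i' j)"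

definition PLS23 :: "nat \<Rightarrow> pls set" where
  "PLS23 n = {P. is_PLS n P \<and>
     (\<forall>i\<in>{1..n}. \<forall>j\<in>{1..n}. (P i j \<noteq> None \<longleftrightarrow> (i \<le> 2 \<or> j \<le> 3)))}"

text \<open>The (1,2)-row-permutation: sigma(P(1,i)) = P(2,i); identity outside {1..n}.\<close>
definition row_perm :: "nat \<Rightarrow> pls \<Rightarrow> nat \<Rightarrow> nat" where
  "row_perm n P x = (if x \<in> {1..n}
      then the (P 2 (THE i. i \<in> {1..n} \<and> P 1 i = Some x)) else x)"

definition is_cycle :: "(nat \<Rightarrow> nat) \<Rightarrow> nat list \<Rightarrow> bool" where
  "is_cycle \<sigma> xs \<longleftrightarrow> xs \<noteq> [] \<and> distinct xs \<and>
     (\<forall>i < length xs. \<sigma> (xs ! i) = xs ! ((i + 1) mod length xs))"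

definition first3 :: "pls \<Rightarrow> nat set" where
  "first3 P = {the (P 1 1), the (P 1 2), the (P 1 3)}"

definition cycle_type :: "pls \<Rightarrow> nat list \<Rightarrow> nat list" where
  "cycle_type P xs = map (\<lambda>a. if a \<in> first3 P then 1 else 0) xs"

definition seq_equiv :: "nat list \<Rightarrow> nat list \<Rightarrow> bool" where
  "seq_equiv s t \<longleftrightarrow> (\<exists>k. rotate k s = t)"

definition completely_reduced :: "nat \<Rightarrow> pls \<Rightarrow> bool" where
  "completely_reduced n P \<longleftrightarrow>
     (\<forall>xs. is_cycle (row_perm n P) xs \<and> set xs \<subseteq> {1..n} \<longrightarrow>
        (\<exists>t \<in> {[0,0],[0,1],[1,1],[1,0,1],[1,1,1],[1,0,1,0],[1,1,1,0],
                [1,0,1,0,1],[1,0,1,0,1,0]}. seq_equiv (cycle_type P xs) t))"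

definition has_adjacent_zeros :: "nat list \<Rightarrow> bool" where
  "has_adjacent_zeros t \<longleftrightarrow> (\<exists>i. Suc i < length t \<and> t ! i = 0 \<and> t ! Suc i = 0)"

end

(* Since P(1,i) and P(2,i) differ, the row permutation has no fixed points, so every cycle
   has length at least 2, and every 0/1 word of length 2 is equivalent to 00, 01 or 11.
   If no cycle of length at least 3 had two cyclically adjacent zeros, then in the type of
   such a cycle every 0 would be followed by a 1, so it would contain at most as many 0s as 1s.
   The 1s mark distinct elements of {P(1,1), P(1,2), P(1,3)}, so there are at most three of
   them and the cycle has length at most 6.  A finite check shows that every such word is
   equivalent to one of the nine listed types, so P would be completely reduced. *)

theory Submission
  imports Defs
begin

definition reduced_types :: "nat list set" where
  "reduced_types = {[0,0],[0,1],[1,1],[1,0,1],[1,1,1],[1,0,1,0],[1,1,1,0],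
                    [1,0,1,0,1],[1,0,1,0,1,0]}"

definition cyclic_adjacent_zeros :: "nat list \<Rightarrow> bool" where
  "cyclic_adjacent_zeros w \<longleftrightarrow> (\<exists>i < length w. w ! i = 0 \<and> w ! ((i + 1) mod length w) = 0)"

lemma completely_reduced_iff:
  "completely_reduced n P \<longleftrightarrow>
     (\<forall>xs. is_cycle (row_perm n P) xs \<and> set xs \<subseteq> {1..n} \<longrightarrow>
        (\<exists>t \<in> reduced_types. seq_equiv (cycle_type P xs) t))"
  by (simp only: completely_reduced_def reduced_types_def)

lemma seq_equiv_code:
  "seq_equiv s t \<longleftrightarrow> (\<exists>k \<in> set [0..<Suc (length s)]. rotate k s = t)"
proof
  assume "seq_equiv s t"
  then obtain k where "rotate k s = t" by (auto simp: seq_equiv_def)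
  then have "rotate (k mod length s) s = t" by (simp add: rotate_conv_mod[symmetric])
  then show "\<exists>k \<in> set [0..<Suc (length s)]. rotate k s = t"
    by (cases "s = []") (auto intro!: bexI[of _ "k mod length s"] less_SucI)
qed (unfold seq_equiv_def, blast)

lemma cyclic_adjacent_zeros_code:
  "cyclic_adjacent_zeros w \<longleftrightarrow>
     (\<exists>i \<in> set [0..<length w]. w ! i = 0 \<and> w ! ((i + 1) mod length w) = 0)"
  by (auto simp: cyclic_adjacent_zeros_def)

lemma zeros_le_nonzeros:
  assumes "\<not> cyclic_adjacent_zeros w"
  shows "length (filter (\<lambda>b. b = 0) w) \<le> length (filter (\<lambda>b. b \<noteq> 0) w)"
proof -
  let ?m = "length w"
  let ?succ = "\<lambda>i. (i + 1) mod ?m"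
  let ?Z = "{i. i < ?m \<and> w ! i = 0}" and ?N = "{i. i < ?m \<and> w ! i \<noteq> 0}"
  have "inj_on ?succ ?Z"
    by (auto simp: inj_on_def mod_Suc split: if_splits)
  moreover have "?succ ` ?Z \<subseteq> ?N"
    using assms by (auto simp: cyclic_adjacent_zeros_def intro!: mod_less_divisor)
  ultimately have "card ?Z \<le> card ?N"
    by (rule card_inj_on_le) simp
  then show ?thesis
    by (simp add: length_filter_conv_card)
qed

lemma binary_word_length_2_reduced:
  assumes "set w \<subseteq> {0,1}" and "length w = 2"
  shows "\<exists>t \<in> reduced_types. seq_equiv w t"
proof -
  have "\<forall>w \<in> set (List.n_lists 2 [0,1]). \<exists>t \<in> reduced_types. seq_equiv w t"
    unfolding seq_equiv_code reduced_types_def by code_simp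
  then show ?thesis
    using assms by (simp add: set_n_lists)
qed

lemma sparse_binary_word_reduced:
  assumes "set w \<subseteq> {0,1}" and "3 \<le> length w"
    and "length (filter (\<lambda>b. b \<noteq> 0) w) \<le> 3" and "\<not> cyclic_adjacent_zeros w"
  shows "\<exists>t \<in> reduced_types. seq_equiv w t"
proof -
  have "length w \<le> 6"
    using zeros_le_nonzeros[OF assms(4)] assms(3) sum_length_filter_compl[of "\<lambda>b. b \<noteq> 0" w]
    by simp
  then have "length w \<in> set [3..<7]" and "w \<in> set (List.n_lists (length w) [0,1])"
    using assms(1,2) by (auto simp: set_n_lists)
  moreover have "\<forall>m \<in> set [3..<7]. \<forall>w \<in> set (List.n_lists m [0,1]).
      length (filter (\<lambda>b. b \<noteq> 0) w) \<le> 3 \<longrightarrow> \<not> cyclic_adjacent_zeros w \<longrightarrow>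
      (\<exists>t \<in> reduced_types. seq_equiv w t)"
    unfolding seq_equiv_code cyclic_adjacent_zeros_code reduced_types_def by code_simp
  ultimately show ?thesis
    using assms(3,4) by blast
qed

lemma cyclic_adjacent_zeros_rotate:
  assumes "cyclic_adjacent_zeros w" and "2 \<le> length w"
  shows "\<exists>t. seq_equiv w t \<and> has_adjacent_zeros t"
proof -
  obtain i where i: "i < length w" "w ! i = 0" "w ! ((i + 1) mod length w) = 0"
    using assms(1) by (auto simp: cyclic_adjacent_zeros_def)
  have "0 < length w" and "1 < length w"
    using assms(2) by linarith+
  then have "rotate i w ! 0 = w ! i" and "rotate i w ! 1 = w ! ((i + 1) mod length w)"
    using i(1) by (simp_all add: nth_rotate)
  then have "has_adjacent_zeros (rotate i w)"
    unfolding has_adjacent_zeros_def using i assms(2) by (intro exI[of _ 0]) simp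
  then show ?thesis
    unfolding seq_equiv_def by blast
qed

lemma is_cycle_length_ge_2:
  assumes "is_cycle \<sigma> xs" and "\<forall>x \<in> set xs. \<sigma> x \<noteq> x"
  shows "2 \<le> length xs"
proof (rule ccontr)
  assume "\<not> 2 \<le> length xs"
  moreover have "xs \<noteq> []"
    using assms(1) by (simp add: is_cycle_def)
  ultimately have "length xs = 1"
    by (simp add: not_le less_2_cases_iff)
  then have "\<sigma> (xs ! 0) = xs ! 0"
    using assms(1) by (simp add: is_cycle_def)
  with assms(2) \<open>xs \<noteq> []\<close> show False
    by simp
qed

lemma length_cycle_type [simp]: "length (cycle_type P xs) = length xs"
  by (simp add: cycle_type_def)

lemma cycle_type_binary: "set (cycle_type P xs) \<subseteq> {0,1}"
  by (auto simp: cycle_type_def)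

lemma cycle_type_nonzeros_le_3:
  assumes "distinct xs"
  shows "length (filter (\<lambda>b. b \<noteq> 0) (cycle_type P xs)) \<le> 3"
proof -
  have "length (filter (\<lambda>b. b \<noteq> 0) (cycle_type P xs)) = card (first3 P \<inter> set xs)"
    using assms by (simp add: cycle_type_def filter_map o_def distinct_length_filter)
  also have "\<dots> \<le> card (first3 P)"
    by (rule card_mono) (auto simp: first3_def)
  also have "\<dots> \<le> 3"
    by (simp add: first3_def card_insert_if)
  finally show ?thesis .
qed

lemma
  assumes "is_PLS n P"
  shows is_PLS_symbol_range: "P i j = Some s \<Longrightarrow> s \<in> {1..n}"
    and is_PLS_row_distinct: "j \<noteq> j' \<Longrightarrow> P i j \<noteq> None \<Longrightarrow> P i j \<noteq> P i j'"
    and is_PLS_column_distinct: "i \<noteq> i' \<Longrightarrow> P i j \<noteq> None \<Longrightarrow> P i j \<noteq> P i' j"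
  using assms unfolding is_PLS_def by blast+

lemma first_row_onto:
  assumes "is_PLS n P" and "\<forall>j \<in> {1..n}. P 1 j \<noteq> None" and "x \<in> {1..n}"
  shows "\<exists>j \<in> {1..n}. P 1 j = Some x"
proof -
  define g where "g j = the (P 1 j)" for j
  have P1: "P 1 j = Some (g j)" if "j \<in> {1..n}" for j
    using assms(2) that by (auto simp: g_def)
  have "g ` {1..n} \<subseteq> {1..n}"
    using is_PLS_symbol_range[OF assms(1)] P1 by blast
  moreover have "inj_on g {1..n}"
  proof (rule inj_onI)
    fix j j' assume "j \<in> {1..n}" "j' \<in> {1..n}" "g j = g j'"
    then show "j = j'"
      using is_PLS_row_distinct[OF assms(1)] P1 by (metis option.distinct(1))
  qed
  ultimately have "g ` {1..n} = {1..n}"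
    by (simp add: endo_inj_surj)
  with assms(3) P1 show ?thesis
    by (metis imageE)
qed

lemma row_perm_apply:
  assumes "is_PLS n P" and "j \<in> {1..n}" and "P 1 j = Some x"
  shows "row_perm n P x = the (P 2 j)"
proof -
  have "(THE i. i \<in> {1..n} \<and> P 1 i = Some x) = j"
  proof (rule the_equality)
    fix i assume "i \<in> {1..n} \<and> P 1 i = Some x"
    then show "i = j"
      using is_PLS_row_distinct[OF assms(1), of i j 1] assms(3) by auto
  qed (use assms(2,3) in simp)
  moreover have "x \<in> {1..n}"
    using is_PLS_symbol_range[OF assms(1,3)] .
  ultimately show ?thesis
    by (simp add: row_perm_def)
qed

lemma row_perm_no_fixpoint:
  assumes "is_PLS n P" and "\<forall>j \<in> {1..n}. P 1 j \<noteq> None \<and> P 2 j \<noteq> None" and "x \<in> {1..n}"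
  shows "row_perm n P x \<noteq> x"
proof -
  obtain j where j: "j \<in> {1..n}" "P 1 j = Some x"
    using first_row_onto assms by blast
  then obtain y where y: "P 2 j = Some y"
    using assms(2) by blast
  have "P 1 j \<noteq> P 2 j"
    using is_PLS_column_distinct[OF assms(1), of 1 2 j] j(2) by simp
  then show ?thesis
    using row_perm_apply[OF assms(1) j] j(2) y by simp
qed

lemma PLS23_first_rows_filled:
  assumes "P \<in> PLS23 n" and "2 \<le> n"
  shows "\<forall>j \<in> {1..n}. P 1 j \<noteq> None \<and> P 2 j \<noteq> None"
  using assms by (auto simp: PLS23_def)

theorem lemma4:
  fixes n :: nat and P :: pls
  assumes "n \<ge> 8" and "P \<in> PLS23 n" and "\<not> completely_reduced n P"
  shows "\<exists>xs. is_cycle (row_perm n P) xs \<and> set xs \<subseteq> {1..n} \<and> length xs \<ge> 3 \<and>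
           (\<exists>t. seq_equiv (cycle_type P xs) t \<and> has_adjacent_zeros t)"
proof (rule ccontr)
  assume no_witness: "\<not> ?thesis"
  have P: "is_PLS n P" "\<forall>j \<in> {1..n}. P 1 j \<noteq> None \<and> P 2 j \<noteq> None"
    using assms(1,2) PLS23_first_rows_filled by (auto simp: PLS23_def)
  obtain xs where cyc: "is_cycle (row_perm n P) xs" and sub: "set xs \<subseteq> {1..n}"
    and not_reduced: "\<not> (\<exists>t \<in> reduced_types. seq_equiv (cycle_type P xs) t)"
    using assms(3) unfolding completely_reduced_iff by blast
  have "2 \<le> length xs"
    using cyc sub row_perm_no_fixpoint[OF P] by (intro is_cycle_length_ge_2) auto
  moreover have "length xs \<noteq> 2"
    using binary_word_length_2_reduced[OF cycle_type_binary] not_reduced by auto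
  ultimately have long: "3 \<le> length xs"
    by simp
  have "\<not> cyclic_adjacent_zeros (cycle_type P xs)"
  proof
    assume "cyclic_adjacent_zeros (cycle_type P xs)"
    then obtain t where "seq_equiv (cycle_type P xs) t" and "has_adjacent_zeros t"
      using cyclic_adjacent_zeros_rotate[of "cycle_type P xs"] long by auto
    with no_witness cyc sub long show False
      by blast
  qed
  moreover have "distinct xs"
    using cyc by (simp add: is_cycle_def)
  ultimately show False
    using sparse_binary_word_reduced[OF cycle_type_binary] cycle_type_nonzeros_le_3 long not_reduced
    by auto
qed

end
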